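(* Let $d\ge1$, $s>0$. Suppose that to every $n\in\mathbb{N}_0$ and every cube $Q\subset\mathbb{R}^d$ there is associated a number $E_n(Q)\ge 0$ such that: (i) $E_n(\lambda Q)=\lambda^{-2s}E_n(Q)$ for all $\lambda>0$; (ii) $E_n(Q+\mathbf{x})=E_n(Q)$ for all $\mathbf{x}\in\mathbb{R}^d$; (iii) for any finite collection of disjoint cubes $Q_1,\dots,Q_J$ whose union is a cube, $E_n(\bigcup_j Q_j)\ge \min\{\sum_{j=1}^J E_{n_j}(Q_j): (n_j)\in\mathbb{N}_0^J,\ \sum_j n_j=n\}$; (iv) there exists $q\ge 0$ such that $E_n(Q)>0$ for all $n\ge q$ and all cubes $Q$. Then there is a constant $C>0$ independent of $n$ and $Q$ such that $E_n(Q)\ge C|Q|^{-2s/d}n^{1+2s/d}$ for all integers $n\ge q$ and all cubes $Q$.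
   Context: Cubes are (axis-parallel) cubes in $\mathbb{R}^d$; $\lambda Q$ denotes the dilated cube, $|Q|$ its volume. Disjointness of cubes is understood up to boundaries (measure-zero overlaps). *)

theory Defs
  imports "HOL-Analysis.Analysis"
begin

definition is_cube :: "'a::euclidean_space set \<Rightarrow> bool" where
  "is_cube Q \<longleftrightarrow> (\<exists>a r. r > 0 \<and> Q = cbox a (a + r *\<^sub>R One))"

definition dilate :: "real \<Rightarrow> 'a::euclidean_space set \<Rightarrow> 'a set" where
  "dilate l Q = (\<lambda>y. l *\<^sub>R y) ` Q"

definition translate :: "'a::euclidean_space set \<Rightarrow> 'a \<Rightarrow> 'a set" where
  "translate Q x = (\<lambda>y. y + x) ` Q"

end

theory Submission
  imports Defs
begin

text \<open>By scaling and translation invariance, \<open>E\<^sub>n(Q) = |Q|\<^sup>-\<^sup>2\<^sup>s\<^sup>/\<^sup>d f(n)\<close> with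
  \<open>f(n) = E\<^sub>n([0,1]\<^sup>d)\<close>, so it suffices to show \<open>f(n) \<ge> C n\<^sup>\<alpha>\<close> for
  \<open>\<alpha> = 1 + 2s/d\<close>. Cutting the unit cube into its \<open>m = 2\<^sup>d\<close> dyadic subcubes, superadditivity
  yields a splitting \<open>n = n\<^sub>1 + \<dots> + n\<^sub>m\<close> with \<open>f(n) \<ge> m\<^sup>\<alpha>\<^sup>-\<^sup>1 \<Sum> f(n\<^sub>j)\<close>. Strong
  induction on \<open>n\<close> then works: the parts not exceeding \<open>q\<close> are dropped, and by Jensen's inequality
  \<open>m\<^sup>\<alpha>\<^sup>-\<^sup>1 \<Sum> n\<^sub>j\<^sup>\<alpha> \<ge> n\<^sup>\<alpha>\<close> over the remaining parts once \<open>n\<close> is large, the finitely many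
  small \<open>n\<close> being absorbed into \<open>C\<close>.\<close>

lemma sum_powr_ge_card_powr:
  fixes x :: "'i \<Rightarrow> real" and \<alpha> :: real
  assumes "finite S" "S \<noteq> {}" "\<alpha> \<ge> 1" "\<And>j. j \<in> S \<Longrightarrow> x j > 0"
  shows "real (card S) powr (1 - \<alpha>) * (\<Sum>j\<in>S. x j) powr \<alpha> \<le> (\<Sum>j\<in>S. x j powr \<alpha>)"
proof -
  define c where "c = real (card S)"
  have c_pos: "c > 0" using assms by (simp add: c_def card_gt_0_iff)
  have "((\<Sum>j\<in>S. x j) / c) powr \<alpha> \<le> (\<Sum>j\<in>S. x j powr \<alpha>) / c"
  proof -
    have "(\<Sum>j\<in>S. (1 / c) *\<^sub>R x j) powr \<alpha> \<le> (\<Sum>j\<in>S. (1 / c) * x j powr \<alpha>)"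
      by (rule convex_on_sum[OF assms(1,2) powr_convex[OF assms(3)]])
        (use assms c_pos in \<open>auto simp: c_def\<close>)
    thus ?thesis by (simp add: sum_divide_distrib sum_distrib_left)
  qed
  moreover have "((\<Sum>j\<in>S. x j) / c) powr \<alpha> = (\<Sum>j\<in>S. x j) powr \<alpha> / c powr \<alpha>"
    using c_pos assms by (auto intro!: powr_divide sum_nonneg less_imp_le)
  ultimately have "(\<Sum>j\<in>S. x j) powr \<alpha> / c powr \<alpha> * c \<le> (\<Sum>j\<in>S. x j powr \<alpha>)"
    using c_pos by (simp add: field_simps)
  moreover have "c powr (1 - \<alpha>) = c / c powr \<alpha>"
    using c_pos by (simp add: powr_diff)
  ultimately show ?thesis by (simp add: c_def field_simps)
qed

lemma eventually_powr_le_shifted: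
  fixes \<theta> c \<alpha> :: real
  assumes "\<theta> > 1" "\<alpha> > 0"
  shows "\<forall>\<^sub>F n in sequentially. real n > c \<and> real n powr \<alpha> \<le> \<theta> * (real n - c) powr \<alpha>"
proof -
  have "(\<lambda>n. \<theta> * (1 - c / real n) powr \<alpha>) \<longlonglongrightarrow> \<theta> * (1 - 0) powr \<alpha>"
    by (intro tendsto_intros tendsto_divide_0[OF tendsto_const] filterlim_real_sequentially)
      (use assms in auto)
  hence "\<forall>\<^sub>F n in sequentially. \<theta> * (1 - c / real n) powr \<alpha> > 1"
    using assms by (intro order_tendstoD) auto
  moreover have "\<forall>\<^sub>F n in sequentially. real n > max c 0"
    using filterlim_real_sequentially filterlim_at_top_dense by blast
  ultimately show ?thesis
  proof eventually_elim
    case (elim n)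
    hence "real n - c = (1 - c / real n) * real n" "1 - c / real n \<ge> 0"
      by (auto simp: field_simps)
    hence "\<theta> * (real n - c) powr \<alpha> = (\<theta> * (1 - c / real n) powr \<alpha>) * real n powr \<alpha>"
      by (simp add: powr_mult)
    also have "\<dots> \<ge> real n powr \<alpha>"
      using elim by (simp add: mult_le_cancel_right1)
    finally show ?case using elim by simp
  qed
qed

lemma sum_le_sum_large_parts:
  fixes ns :: "nat \<Rightarrow> nat"
  shows "(\<Sum>j<m. ns j) \<le> (\<Sum>j | j < m \<and> p < ns j. ns j) + m * p"
proof -
  define S where "S = {j. j < m \<and> p < ns j}"
  have S: "S \<subseteq> {..<m}" "finite S" by (auto simp: S_def)
  have "(\<Sum>j\<in>{..<m} - S. ns j) \<le> m * p"
    using sum_mono[of "{..<m} - S" ns "\<lambda>_. p"] card_Diff_subset[OF S(2,1)]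
    by (fastforce simp: S_def intro: order_trans)
  moreover have "(\<Sum>j<m. ns j) = (\<Sum>j\<in>S. ns j) + (\<Sum>j\<in>{..<m} - S. ns j)"
    using S sum.subset_diff[of S "{..<m}" ns] by (simp add: add.commute)
  ultimately show ?thesis unfolding S_def by linarith
qed

text \<open>If \<open>n\<close> is split into \<open>m\<close> parts, then for large \<open>n\<close> the parts exceeding \<open>p\<close>
  still carry the full weight \<open>n\<^sup>\<alpha>\<close>: either all parts exceed \<open>p\<close> and Jensen's inequality
  is sharp, or at most \<open>m - 1\<close> of them do and Jensen gains the factor
  \<open>(m / (m - 1))\<^sup>\<alpha>\<^sup>-\<^sup>1 > 1\<close>, which beats the loss of at most \<open>m p\<close>.\<close>
lemma eventually_split_powr_lower_bound:
  fixes m p :: nat and \<alpha> :: real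
  assumes "m \<ge> 2" "\<alpha> > 1"
  shows "\<forall>\<^sub>F n in sequentially. \<forall>ns. (\<Sum>j<m. ns j) = n \<longrightarrow>
           real n powr \<alpha> \<le> real m powr (\<alpha> - 1) * (\<Sum>j | j < m \<and> p < ns j. real (ns j) powr \<alpha>)"
proof -
  define K where "K = real m powr (\<alpha> - 1)"
  define \<theta> where "\<theta> = K * real (m - 1) powr (1 - \<alpha>)"
  have "\<theta> = (real m / real (m - 1)) powr (\<alpha> - 1)"
    using assms by (simp add: \<theta>_def K_def powr_divide powr_minus_divide powr_diff powr_minus divide_simps)
  hence "\<theta> > 1" using assms by simp
  with assms have "\<forall>\<^sub>F n in sequentially.
      real (m * p) < real n \<and> real n powr \<alpha> \<le> \<theta> * (real n - real (m * p)) powr \<alpha>"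
    by (intro eventually_powr_le_shifted) auto
  then show ?thesis
  proof (rule eventually_mono, intro allI impI)
    fix n ns
    assume n: "real (m * p) < real n \<and> real n powr \<alpha> \<le> \<theta> * (real n - real (m * p)) powr \<alpha>"
      and ns: "(\<Sum>j<m. ns j) = n"
    define S where "S = {j. j < m \<and> p < ns j}"
    have S: "S \<subseteq> {..<m}" "finite S" by (auto simp: S_def)
    have "real n \<le> real (\<Sum>j\<in>S. ns j) + real (m * p)"
      using sum_le_sum_large_parts[of ns m p] ns unfolding S_def
      by (metis of_nat_add of_nat_mono)
    hence sum_S: "real n - real (m * p) \<le> (\<Sum>j\<in>S. real (ns j))"
      by simp
    hence "S \<noteq> {}" using n by auto
    have jensen: "real (card S) powr (1 - \<alpha>) * (\<Sum>j\<in>S. real (ns j)) powr \<alpha> \<le> (\<Sum>j\<in>S. real (ns j) powr \<alpha>)"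
      by (rule sum_powr_ge_card_powr[OF S(2) \<open>S \<noteq> {}\<close>]) (use assms in \<open>auto simp: S_def\<close>)
    have "real n powr \<alpha> \<le> K * (\<Sum>j\<in>S. real (ns j) powr \<alpha>)"
    proof (cases "S = {..<m}")
      case True
      hence "K * real (card S) powr (1 - \<alpha>) = 1" "(\<Sum>j\<in>S. real (ns j)) = real n"
        using assms ns by (simp_all add: K_def flip: powr_add of_nat_sum)
      thus ?thesis using mult_left_mono[OF jensen, of K] by (simp add: K_def mult.assoc[symmetric])
    next
      case False
      hence "card S < m" using S by (metis card_lessThan card_seteq finite_lessThan not_le)
      hence "real (m - 1) powr (1 - \<alpha>) \<le> real (card S) powr (1 - \<alpha>)"
        using \<open>S \<noteq> {}\<close> S assms by (intro powr_mono2') (auto simp: card_gt_0_iff)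
      hence "\<theta> \<le> K * real (card S) powr (1 - \<alpha>)" unfolding \<theta>_def K_def by (simp add: mult_left_mono)
      moreover have "(real n - real (m * p)) powr \<alpha> \<le> (\<Sum>j\<in>S. real (ns j)) powr \<alpha>"
        using sum_S n assms by (intro powr_mono2) auto
      ultimately have "\<theta> * (real n - real (m * p)) powr \<alpha>
          \<le> K * (real (card S) powr (1 - \<alpha>) * (\<Sum>j\<in>S. real (ns j)) powr \<alpha>)"
        using \<open>\<theta> > 1\<close> by (simp add: mult.assoc[symmetric] mult_mono)
      also have "\<dots> \<le> K * (\<Sum>j\<in>S. real (ns j) powr \<alpha>)"
        using jensen by (simp add: K_def mult_left_mono)
      finally show ?thesis using n by simp
    qed
    thus "real n powr \<alpha> \<le> real m powr (\<alpha> - 1) * (\<Sum>j | j < m \<and> p < ns j. real (ns j) powr \<alpha>)"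
      by (simp add: K_def S_def)
  qed
qed

lemma split_part_less:
  fixes f :: "nat \<Rightarrow> real" and ns :: "nat \<Rightarrow> nat"
  assumes "K > 1" "f n > 0" "(\<Sum>j<m. ns j) = n" "K * (\<Sum>j<m. f (ns j)) \<le> f n"
    and "\<And>j. j < m \<Longrightarrow> f (ns j) \<ge> 0" "j < m"
  shows "ns j < n"
proof (rule ccontr)
  assume "\<not> ns j < n"
  moreover have "ns j \<le> n"
    using assms(3,6) member_le_sum[of j "{..<m}" ns] by auto
  ultimately have "f n \<le> (\<Sum>j<m. f (ns j))"
    using assms(5,6) member_le_sum[of j "{..<m}" "\<lambda>j. f (ns j)"] by auto
  hence "K * f n \<le> f n"
    using assms(1,4) by (smt (verit) mult_left_mono)
  with assms(1,2) show False by simp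
qed

lemma ex_pos_const_powr_le_on_interval:
  fixes f :: "nat \<Rightarrow> real" and \<alpha> :: real
  assumes "a \<ge> 1" "\<And>k. k \<in> {a..b} \<Longrightarrow> f k > 0"
  shows "\<exists>C>0. \<forall>k\<in>{a..b}. C * real k powr \<alpha> \<le> f k"
proof (cases "a \<le> b")
  case True
  define C where "C = Min ((\<lambda>k. f k / real k powr \<alpha>) ` {a..b})"
  have "C > 0"
    unfolding C_def using True assms by (subst Min_gr_iff) (auto intro!: divide_pos_pos)
  moreover have "C * real k powr \<alpha> \<le> f k" if "k \<in> {a..b}" for k
  proof -
    have "C \<le> f k / real k powr \<alpha>" unfolding C_def using that by (intro Min_le) auto
    thus ?thesis using that assms(1) by (simp add: field_simps)
  qed
  ultimately show ?thesis by blast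
qed (auto intro: exI[of _ 1])

lemma superadditive_powr_lower_bound:
  fixes f :: "nat \<Rightarrow> real" and m q :: nat and \<alpha> :: real
  assumes "m \<ge> 2" "\<alpha> > 1"
    and nonneg: "\<And>k. f k \<ge> 0" and pos: "\<And>k. k \<ge> q \<Longrightarrow> f k > 0"
    and split: "\<And>n. \<exists>ns. (\<Sum>j<m. ns j) = n \<and> real m powr (\<alpha> - 1) * (\<Sum>j<m. f (ns j)) \<le> f n"
  shows "\<exists>C>0. \<forall>n\<ge>q. C * real n powr \<alpha> \<le> f n"
proof -
  define q' where "q' = max q 1"
  define K where "K = real m powr (\<alpha> - 1)"
  have "K > 1" using assms(1,2) by (simp add: K_def)
  obtain N where N: "\<And>n ns. n \<ge> N \<Longrightarrow> (\<Sum>j<m. ns j) = n \<Longrightarrow>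
      real n powr \<alpha> \<le> K * (\<Sum>j | j < m \<and> q < ns j. real (ns j) powr \<alpha>)"
    using eventually_split_powr_lower_bound[OF assms(1,2), of q]
    unfolding eventually_sequentially K_def by blast
  define N' where "N' = max N q'"
  obtain C where "C > 0" and base: "\<And>k. k \<in> {q'..N'} \<Longrightarrow> C * real k powr \<alpha> \<le> f k"
    using ex_pos_const_powr_le_on_interval[of q' N' f \<alpha>] pos by (auto simp: q'_def)
  have "C * real n powr \<alpha> \<le> f n" if "q' \<le> n" for n
    using that
  proof (induction n rule: less_induct)
    case (less n)
    show ?case
    proof (cases "n \<le> N'")
      case True
      thus ?thesis using base less.prems by simp
    next
      case False
      obtain ns where ns: "(\<Sum>j<m. ns j) = n" "K * (\<Sum>j<m. f (ns j)) \<le> f n"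
        using split[of n] unfolding K_def by blast
      define S where "S = {j. j < m \<and> q < ns j}"
      have IH: "C * real (ns j) powr \<alpha> \<le> f (ns j)" if "j \<in> S" for j
      proof (rule less.IH)
        show "ns j < n"
          using split_part_less[OF \<open>K > 1\<close> _ ns nonneg] less.prems that pos
          by (auto simp: S_def q'_def)
        show "q' \<le> ns j" using that by (auto simp: S_def q'_def)
      qed
      have "C * real n powr \<alpha> \<le> C * (K * (\<Sum>j\<in>S. real (ns j) powr \<alpha>))"
        using N[OF _ ns(1)] False \<open>C > 0\<close> by (simp add: N'_def S_def)
      also have "\<dots> = K * (\<Sum>j\<in>S. C * real (ns j) powr \<alpha>)"
        by (simp add: sum_distrib_left mult.left_commute)
      also have "\<dots> \<le> K * (\<Sum>j\<in>S. f (ns j))"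
        using IH \<open>K > 1\<close> by (intro mult_left_mono sum_mono) auto
      also have "\<dots> \<le> K * (\<Sum>j<m. f (ns j))"
        using nonneg \<open>K > 1\<close> by (intro mult_left_mono sum_mono2) (auto simp: S_def)
      finally show ?thesis using ns(2) by simp
    qed
  qed
  moreover have "C * real 0 powr \<alpha> \<le> f 0" using nonneg by simp
  ultimately have "C * real n powr \<alpha> \<le> f n" if "n \<ge> q" for n
    using that by (cases "n = 0") (auto simp: q'_def)
  with \<open>C > 0\<close> show ?thesis by blast
qed

lemma translate_dilate_unit_cube:
  fixes a :: "'a::euclidean_space"
  assumes "r > 0"
  shows "translate (dilate r (cbox 0 One)) a = cbox a (a + r *\<^sub>R One)"
proof -
  have "dilate r (cbox (0::'a) One) = cbox 0 (r *\<^sub>R One)"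
    using image_smult_cbox[of r 0 "One::'a"] assms
    by (simp add: dilate_def box_ne_empty inner_Basis)
  thus ?thesis
    using cbox_translation[of a 0 "r *\<^sub>R One"] by (simp add: translate_def add.commute)
qed

lemma is_cubeE:
  fixes Q :: "'a::euclidean_space set"
  assumes "is_cube Q"
  obtains a r where "r > 0" "Q = translate (dilate r (cbox 0 One)) a"
  using assms translate_dilate_unit_cube unfolding is_cube_def by metis

lemma is_cube_unit_cube: "is_cube (cbox 0 (One::'a::euclidean_space))"
  unfolding is_cube_def by (rule exI[of _ 0], rule exI[of _ 1]) simp

lemma is_cube_dilate_unit_cube:
  assumes "r > 0"
  shows "is_cube (dilate r (cbox 0 (One::'a::euclidean_space)))"
proof -
  have "dilate r (cbox 0 (One::'a)) = cbox 0 (0 + r *\<^sub>R One)"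
    using translate_dilate_unit_cube[OF assms, of 0] by (simp add: translate_def)
  with assms show ?thesis unfolding is_cube_def by blast
qed

lemma measure_cube:
  fixes a :: "'a::euclidean_space"
  assumes "r \<ge> 0"
  shows "measure lebesgue (cbox a (a + r *\<^sub>R One)) = r ^ DIM('a)"
proof -
  have "measure lebesgue (cbox a (a + r *\<^sub>R One)) = (\<Prod>i\<in>Basis. (a + r *\<^sub>R One) \<bullet> i - a \<bullet> i)"
    using assms by (simp add: measure_completion content_cbox inner_simps)
  thus ?thesis by (simp add: inner_simps)
qed

definition half_corner :: "'a::euclidean_space set \<Rightarrow> 'a" where
  "half_corner T = (1/2) *\<^sub>R (\<Sum>b\<in>T. b)"

definition unit_subcube :: "'a::euclidean_space set \<Rightarrow> 'a set" where
  "unit_subcube T = cbox (half_corner T) (half_corner T + (1/2) *\<^sub>R One)"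

lemma inner_half_corner:
  assumes "T \<subseteq> Basis" "i \<in> Basis"
  shows "half_corner T \<bullet> i = (if i \<in> T then 1/2 else 0)"
proof -
  have "(\<Sum>b\<in>T. b \<bullet> i) = (\<Sum>b\<in>T. if b = i then 1 else 0)"
    using assms by (intro sum.cong) (auto simp: inner_Basis)
  also have "\<dots> = (if i \<in> T then 1 else 0)"
    using finite_subset[OF assms(1) finite_Basis] by (simp add: sum.delta')
  finally show ?thesis unfolding half_corner_def by (simp add: inner_sum_left)
qed

lemma interior_unit_subcubes_disjoint:
  assumes "T \<subseteq> Basis" "T' \<subseteq> Basis" "T \<noteq> T'"
  shows "interior (unit_subcube T) \<inter> interior (unit_subcube T') = {}"
proof (rule ccontr)
  assume "interior (unit_subcube T) \<inter> interior (unit_subcube T') \<noteq> {}"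
  then obtain x where x: "x \<in> box (half_corner T) (half_corner T + (1/2) *\<^sub>R One)"
      "x \<in> box (half_corner T') (half_corner T' + (1/2) *\<^sub>R One)"
    unfolding unit_subcube_def by auto
  have "i \<in> T \<longleftrightarrow> i \<in> T'" if "i \<in> Basis" for i
    using x that inner_half_corner[OF assms(1) that] inner_half_corner[OF assms(2) that]
    unfolding mem_box by (auto simp: inner_simps split: if_splits dest!: bspec[OF _ that])
  hence "T = T'" using assms(1,2) by blast
  with assms(3) show False ..
qed

lemma Union_unit_subcubes: "(\<Union>T\<in>Pow Basis. unit_subcube T) = cbox 0 (One::'a::euclidean_space)"
proof (intro equalityI subsetI)
  fix x :: 'a assume "x \<in> (\<Union>T\<in>Pow Basis. unit_subcube T)"
  then obtain T where "T \<subseteq> Basis" "x \<in> unit_subcube T" by auto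
  thus "x \<in> cbox 0 One"
    unfolding unit_subcube_def mem_box
    by (force simp: inner_simps inner_half_corner split: if_splits)
next
  fix x :: 'a assume x: "x \<in> cbox 0 One"
  define T where "T = {i\<in>Basis. x \<bullet> i \<ge> 1/2}"
  have "T \<subseteq> Basis" by (simp add: T_def)
  moreover have "x \<in> unit_subcube T"
    unfolding unit_subcube_def mem_box
  proof
    fix i :: 'a assume "i \<in> Basis"
    thus "half_corner T \<bullet> i \<le> x \<bullet> i \<and> x \<bullet> i \<le> (half_corner T + (1/2) *\<^sub>R One) \<bullet> i"
      using x inner_half_corner[OF \<open>T \<subseteq> Basis\<close>] by (auto simp: mem_box inner_simps T_def)
  qed
  ultimately show "x \<in> (\<Union>T\<in>Pow Basis. unit_subcube T)" by auto
qed

lemma unit_cube_dyadic_decomposition: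
  obtains Qs :: "nat \<Rightarrow> 'a::euclidean_space set"
  where "\<And>j. j < 2 ^ DIM('a) \<Longrightarrow> is_cube (Qs j) \<and> measure lebesgue (Qs j) = (1/2) ^ DIM('a)"
    and "\<forall>i<2 ^ DIM('a). \<forall>j<2 ^ DIM('a). i \<noteq> j \<longrightarrow> interior (Qs i) \<inter> interior (Qs j) = {}"
    and "(\<Union>j<2 ^ DIM('a). Qs j) = cbox 0 One"
proof -
  obtain h where h: "bij_betw h {..<(2::nat) ^ DIM('a)} (Pow (Basis :: 'a set))"
    using ex_bij_betw_nat_finite[of "Pow (Basis :: 'a set)"]
    by (auto simp: card_Pow atLeast0LessThan)
  show ?thesis
  proof
    fix j :: nat assume "j < 2 ^ DIM('a)"
    show "is_cube (unit_subcube (h j)) \<and> measure lebesgue (unit_subcube (h j)) = (1/2) ^ DIM('a)"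
      unfolding unit_subcube_def is_cube_def
      by (intro conjI exI[of _ "half_corner (h j)"] exI[of _ "1/2::real"] measure_cube) auto
  next
    show "\<forall>i<2 ^ DIM('a). \<forall>j<2 ^ DIM('a). i \<noteq> j \<longrightarrow>
        interior (unit_subcube (h i)) \<inter> interior (unit_subcube (h j)) = {}"
      using h interior_unit_subcubes_disjoint
      unfolding bij_betw_def inj_on_def by (metis PowD imageI lessThan_iff)
  next
    show "(\<Union>j<2 ^ DIM('a). unit_subcube (h j)) = cbox 0 (One::'a)"
      using h Union_unit_subcubes unfolding bij_betw_def by (metis image_image)
  qed
qed

lemma Min_compositions_attained:
  fixes g :: "nat \<Rightarrow> nat \<Rightarrow> real"
  assumes "J > 0"
  obtains ns where "(\<Sum>j<J. ns j) = n"
    and "Min {(\<Sum>j<J. g j (ns j)) | ns. (\<Sum>j<J. ns j) = n} = (\<Sum>j<J. g j (ns j))"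
proof -
  define A where "A = {(\<Sum>j<J. g j (ns j)) | ns. (\<Sum>j<J. ns j) = n}"
  have "A \<subseteq> (\<lambda>ns. \<Sum>j<J. g j (ns j)) ` PiE {..<J} (\<lambda>_. {..n})"
  proof
    fix x assume "x \<in> A"
    then obtain ns where ns: "x = (\<Sum>j<J. g j (ns j))" "(\<Sum>j<J. ns j) = n"
      unfolding A_def by blast
    have "restrict ns {..<J} \<in> PiE {..<J} (\<lambda>_. {..n})"
      using ns(2) member_le_sum[of _ "{..<J}" ns] by auto
    moreover have "x = (\<Sum>j<J. g j (restrict ns {..<J} j))" using ns(1) by simp
    ultimately show "x \<in> (\<lambda>ns. \<Sum>j<J. g j (ns j)) ` PiE {..<J} (\<lambda>_. {..n})" by blast
  qed
  hence "finite A" by (rule finite_subset) (simp add: finite_PiE)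
  moreover have "(\<Sum>j<J. g j (if j = 0 then n else 0)) \<in> A"
    unfolding A_def using assms by (intro CollectI exI[of _ "\<lambda>j. if j = 0 then n else 0"]) simp
  ultimately have "Min A \<in> A" by (intro Min_in) auto
  thus ?thesis using that unfolding A_def by blast
qed

locale cube_functional =
  fixes E :: "nat \<Rightarrow> 'a::euclidean_space set \<Rightarrow> real" and s :: real
  assumes scaling: "\<And>n Q l. is_cube Q \<Longrightarrow> l > 0 \<Longrightarrow> E n (dilate l Q) = l powr (-2 * s) * E n Q"
    and transl: "\<And>n Q x. is_cube Q \<Longrightarrow> E n (translate Q x) = E n Q"
    and superadd: "\<And>n (J::nat) Qs. (\<forall>j<J. is_cube (Qs j)) \<Longrightarrow>
         (\<forall>i<J. \<forall>j<J. i \<noteq> j \<longrightarrow> interior (Qs i) \<inter> interior (Qs j) = {}) \<Longrightarrow>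
         is_cube (\<Union>j<J. Qs j) \<Longrightarrow>
         E n (\<Union>j<J. Qs j) \<ge> Min {(\<Sum>j<J. E (ns j) (Qs j)) | ns. (\<Sum>j<J. ns j) = n}"
begin

lemma E_cube_eq_unit_cube:
  assumes "is_cube Q"
  shows "E n Q = measure lebesgue Q powr (-2 * s / DIM('a)) * E n (cbox 0 One)"
proof -
  obtain a r where r: "r > 0" and Q: "Q = translate (dilate r (cbox 0 One)) a"
    using is_cubeE[OF assms] .
  have "measure lebesgue Q = r ^ DIM('a)"
    unfolding Q translate_dilate_unit_cube[OF r] using r by (intro measure_cube) simp
  hence "measure lebesgue Q powr (-2 * s / DIM('a)) = r powr (-2 * s)"
    using r by (simp add: powr_realpow[symmetric] powr_powr)
  moreover have "E n Q = r powr (-2 * s) * E n (cbox 0 One)"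
    using Q transl[OF is_cube_dilate_unit_cube[OF r]] scaling[OF is_cube_unit_cube r] by simp
  ultimately show ?thesis by simp
qed

lemma unit_cube_split:
  "\<exists>ns. (\<Sum>j<(2::nat) ^ DIM('a). ns j) = n \<and>
     real (2 ^ DIM('a)) powr (2 * s / DIM('a)) * (\<Sum>j<2 ^ DIM('a). E (ns j) (cbox 0 One))
       \<le> E n (cbox 0 (One::'a))"
proof -
  obtain Qs :: "nat \<Rightarrow> 'a set"
    where cubes: "\<And>j. j < 2 ^ DIM('a) \<Longrightarrow> is_cube (Qs j) \<and> measure lebesgue (Qs j) = (1/2) ^ DIM('a)"
      and disjoint: "\<forall>i<2 ^ DIM('a). \<forall>j<2 ^ DIM('a). i \<noteq> j \<longrightarrow> interior (Qs i) \<inter> interior (Qs j) = {}"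
      and union: "(\<Union>j<2 ^ DIM('a). Qs j) = cbox 0 One"
    using unit_cube_dyadic_decomposition[where 'a = 'a] by blast
  obtain ns where ns: "(\<Sum>j<2 ^ DIM('a). ns j) = n"
    "Min {(\<Sum>j<2 ^ DIM('a). E (ns j) (Qs j)) | ns. (\<Sum>j<2 ^ DIM('a). ns j) = n}
       = (\<Sum>j<2 ^ DIM('a). E (ns j) (Qs j))"
    by (rule Min_compositions_attained[of "2 ^ DIM('a)"]) simp
  have "(\<Sum>j<2 ^ DIM('a). E (ns j) (Qs j)) \<le> E n (cbox 0 One)"
    using superadd[OF _ disjoint, of n] cubes union is_cube_unit_cube ns(2) by simp
  moreover have "E k (Qs j) = real (2 ^ DIM('a)) powr (2 * s / DIM('a)) * E k (cbox 0 One)"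
    if "j < 2 ^ DIM('a)" for j k
    using cubes[OF that] E_cube_eq_unit_cube[of "Qs j" k]
    by (simp add: power_one_over powr_minus_divide powr_divide)
  ultimately show ?thesis
    using ns(1) by (auto simp: sum_distrib_left)
qed

end

theorem mainTheorem3:
  fixes E :: "nat \<Rightarrow> 'a::euclidean_space set \<Rightarrow> real" and s :: real and q :: nat
  assumes s_pos: "s > 0"
    and nonneg: "\<And>n Q. is_cube Q \<Longrightarrow> E n Q \<ge> 0"
    and scaling: "\<And>n Q l. is_cube Q \<Longrightarrow> l > 0 \<Longrightarrow> E n (dilate l Q) = l powr (-2 * s) * E n Q"
    and transl: "\<And>n Q x. is_cube Q \<Longrightarrow> E n (translate Q x) = E n Q"
    and superadd: "\<And>n (J::nat) Qs. (\<forall>j<J. is_cube (Qs j)) \<Longrightarrow>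
         (\<forall>i<J. \<forall>j<J. i \<noteq> j \<longrightarrow> interior (Qs i) \<inter> interior (Qs j) = {}) \<Longrightarrow>
         is_cube (\<Union>j<J. Qs j) \<Longrightarrow>
         E n (\<Union>j<J. Qs j) \<ge> Min {(\<Sum>j<J. E (ns j) (Qs j)) | ns. (\<Sum>j<J. ns j) = n}"
    and pos: "\<forall>n\<ge>q. \<forall>Q. is_cube Q \<longrightarrow> E n Q > 0"
  shows "(\<exists>C>0. \<forall>n\<ge>q. \<forall>Q. is_cube Q \<longrightarrow>
       E n Q \<ge> C * measure lebesgue Q powr (-2 * s / DIM('a)) * real n powr (1 + 2 * s / DIM('a)))"
proof -
  interpret cube_functional E s
    using scaling transl superadd by unfold_locales
  define \<alpha> where "\<alpha> = 1 + 2 * s / DIM('a)"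
  have "(2::nat) \<le> 2 ^ DIM('a)" "\<alpha> > 1"
    using s_pos by (simp_all add: \<alpha>_def DIM_positive Suc_leI self_le_power)
  moreover have "\<And>n. E n (cbox 0 One) \<ge> 0" "\<And>n. n \<ge> q \<Longrightarrow> E n (cbox 0 One) > 0"
    using nonneg pos is_cube_unit_cube by auto
  ultimately obtain C where "C > 0" and C: "\<And>n. n \<ge> q \<Longrightarrow> C * real n powr \<alpha> \<le> E n (cbox 0 One)"
    using superadditive_powr_lower_bound[of "2 ^ DIM('a)" \<alpha> "\<lambda>n. E n (cbox 0 One)" q]
      unit_cube_split by (auto simp: \<alpha>_def)
  have "C * measure lebesgue Q powr (-2 * s / DIM('a)) * real n powr \<alpha> \<le> E n Q"
    if "n \<ge> q" "is_cube Q" for n Q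
    using mult_left_mono[OF C[OF that(1)], of "measure lebesgue Q powr (-2 * s / DIM('a))"]
      E_cube_eq_unit_cube[OF that(2)] by (simp add: mult_ac)
  with \<open>C > 0\<close> show ?thesis unfolding \<alpha>_def by blast
qed

end
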